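(* Let $\mathcal M_1$ and $\mathcal M_2$ be the G-models defined in the context. Then: 1. $\mathcal M_1$ satisfies the condition $I(P,Q)$: for every state $u\in W_1$ there is $a\in\mathbb N$ with $\mathbf v\Vdash_1 P\mathbf a$ and $u\not\Vdash_1 Q\mathbf a$; 2. $\mathcal M_2$ does not satisfy the condition $J(P,Q)$, i.e. it is not the case that for every state $u\in W_2$ there is $a\in\mathbb N$ with $u\Vdash_2 P\mathbf a$ and $u\not\Vdash_2 Q\mathbf a$.
   Context: Let $\mathbb N=\{0,1,2,\dots\}$ and for $k>0$, $l\ge0$ let $k\mathbb N+l=\{kn+l: n\in\mathbb N\}$, $k\mathbb N=k\mathbb N+0$. A quasi-partition is a triple $(A,B,C)$ of pairwise disjoint subsets of $\mathbb N$ with $A\cup B\cup C=\mathbb N$, $A$ and $C$ infinite, and $B$ either empty or infinite. Order quasi-partitions by $(A,B,C)\sqsubseteq(D,E,F)$ iff $A\subseteq D$ and $F\subseteq C$. Let $\mathbf v=(\mathbf v_1,\mathbf v_2,\mathbf v_3)=(3\mathbb N,3\mathbb N+1,3\mathbb N+2)$ and $\mathbf w=(2\mathbb N,\emptyset,2\mathbb N+1)$. A G-model is $\langle W,\le,v_0,D,\phi\rangle$ with $\le$ a reflexive transitive relation on the nonempty set $W$, base point $v_0\le v$ for all $v$, nonempty domain $D$, and monotone interpretations $\phi(P)\subseteq W\times D^k$; atomic forcing is $v\Vdash P\mathbf a$ iff $\langle v,a\rangle\in\phi(P)$. $\mathcal M_1$: states $W_1$ = all quasi-partitions $(A,B,C)$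 with $\mathbf v\sqsubseteq(A,B,C)$ and $B\cap\mathbf v_2$ infinite; base point $\mathbf v$. $\mathcal M_2$: states $W_2$ = all quasi-partitions $(A,B,C)$ with $\mathbf w\sqsubseteq(A,B,C)$ and $B\ne\emptyset$, together with $\mathbf w$; base point $\mathbf w$. In both, the order is $\sqsubseteq$, the domain is $\mathbb N$, and for a state $s=(s_1,s_2,s_3)$ and $a\in\mathbb N$: $s\Vdash P\mathbf a$ iff $a\in s_1\cup s_2$, and $s\Vdash Q\mathbf a$ iff $a\in s_1$. $\Vdash_i$ denotes forcing in $\mathcal M_i$. *)

theory Defs
  imports Main
begin

type_synonym qpart = "nat set \<times> nat set \<times> nat set"

definition quasi_partition :: "qpart \<Rightarrow> bool" where
  "quasi_partition s \<longleftrightarrow> (case s of (A, B, C) \<Rightarrow>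
     A \<inter> B = {} \<and> A \<inter> C = {} \<and> B \<inter> C = {} \<and> A \<union> B \<union> C = UNIV \<and>
     infinite A \<and> infinite C \<and> (B = {} \<or> infinite B))"

definition qp_le :: "qpart \<Rightarrow> qpart \<Rightarrow> bool" (infix "\<sqsubseteq>" 50) where
  "s \<sqsubseteq> t \<longleftrightarrow> (case s of (A, B, C) \<Rightarrow> case t of (D, E, F) \<Rightarrow> A \<subseteq> D \<and> F \<subseteq> C)"

definition vv :: qpart where
  "vv = ({n. n mod 3 = 0}, {n. n mod 3 = 1}, {n. n mod 3 = 2})"

definition ww :: qpart where
  "ww = ({n. even n}, {}, {n. odd n})"

definition W1 :: "qpart set" where
  "W1 = {(A, B, C). quasi_partition (A, B, C) \<and> vv \<sqsubseteq> (A, B, C)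
          \<and> infinite (B \<inter> fst (snd vv))}"

definition W2 :: "qpart set" where
  "W2 = {(A, B, C). quasi_partition (A, B, C) \<and> ww \<sqsubseteq> (A, B, C) \<and> B \<noteq> {}} \<union> {ww}"

definition forcesP :: "qpart \<Rightarrow> nat \<Rightarrow> bool" where
  "forcesP s a \<longleftrightarrow> a \<in> fst s \<union> fst (snd s)"

definition forcesQ :: "qpart \<Rightarrow> nat \<Rightarrow> bool" where
  "forcesQ s a \<longleftrightarrow> a \<in> fst s"

end

theory Submission
  imports Defs
begin

text \<open>Every state of \<open>W\<^sub>1\<close> keeps infinitely many points of \<open>3\<nat>+1\<close> in its middle block, and
  such a point is forced to be \<open>P\<close> at the base point \<open>v\<close> but is not \<open>Q\<close> at the state.
  The base point \<open>w\<close> of \<open>M\<^sub>2\<close> has an empty middle block, so \<open>P\<close> and \<open>Q\<close> coincide there.\<close>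

lemma quasi_partition_middle_not_forcesQ:
  assumes "quasi_partition (A, B, C)" and "a \<in> B"
  shows "\<not> forcesQ (A, B, C) a"
  using assms by (auto simp: quasi_partition_def forcesQ_def)

lemma forcesP_iff_forcesQ_if_middle_empty:
  "forcesP (A, {}, C) a \<longleftrightarrow> forcesQ (A, {}, C) a"
  by (simp add: forcesP_def forcesQ_def)

lemma forcesP_vv_of_mod_3_eq_1: "a mod 3 = 1 \<Longrightarrow> forcesP vv a"
  by (simp add: forcesP_def vv_def)

lemma W1_has_middle_point_mod_3_eq_1:
  assumes "u \<in> W1"
  obtains A B C a where "u = (A, B, C)" "quasi_partition (A, B, C)" "a \<in> B" "a mod 3 = 1"
proof -
  from assms obtain A B C where u: "u = (A, B, C)" "quasi_partition (A, B, C)"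
    and inf: "infinite (B \<inter> {n. n mod 3 = 1})"
    by (auto simp: W1_def vv_def)
  from inf obtain a where "a \<in> B" "a mod 3 = 1"
    using infinite_imp_nonempty by blast
  with u that show thesis by blast
qed

lemma ww_in_W2: "ww \<in> W2"
  by (simp add: W2_def)

theorem lemma5p1:
  shows "(\<forall>u\<in>W1. \<exists>a::nat. forcesP vv a \<and> \<not> forcesQ u a)
       \<and> \<not> (\<forall>u\<in>W2. \<exists>a::nat. forcesP u a \<and> \<not> forcesQ u a)"
proof
  show "\<forall>u\<in>W1. \<exists>a. forcesP vv a \<and> \<not> forcesQ u a"
  proof
    fix u assume "u \<in> W1"
    then obtain A B C a where "u = (A, B, C)" "quasi_partition (A, B, C)" "a \<in> B" "a mod 3 = 1"
      by (rule W1_has_middle_point_mod_3_eq_1)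
    then show "\<exists>a. forcesP vv a \<and> \<not> forcesQ u a"
      using forcesP_vv_of_mod_3_eq_1 quasi_partition_middle_not_forcesQ by blast
  qed
next
  have "\<not> (forcesP ww a \<and> \<not> forcesQ ww a)" for a
    using forcesP_iff_forcesQ_if_middle_empty by (simp add: ww_def)
  with ww_in_W2 show "\<not> (\<forall>u\<in>W2. \<exists>a. forcesP u a \<and> \<not> forcesQ u a)"
    by blast
qed

end
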